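(* Let $I_n$ denote the number of inversion sequences of length $n$ avoiding all of the patterns $102$, $201$, $210$ (with $I_0=1$). Then $$\sum_{n\ge0} I_n z^n=\frac{2-15z+32z^2-16z^3+z(1-2z)(1+2z)\sqrt{1-4z}}{2(1-z)^2(1-2z)(1-4z)}.$$
   Context: An inversion sequence of length $n$ is an integer sequence $(a_1,\dots,a_n)$ with $0\le a_i<i$ for all $i$. A pattern is a sequence $\sigma$ of non-negative integers containing every value from $0$ to $\max(\sigma)$; the reduction of a sequence replaces its smallest values by $0$, the next smallest by $1$, etc. A sequence $a$ contains $\sigma$ if some (not necessarily consecutive) subsequence of $a$ has reduction $\sigma$; otherwise $a$ avoids $\sigma$. Equivalently, these are the inversion sequences with no $i<j<k$ such that $a_i>a_j$, $a_j\ne a_k$ and $a_i\ne a_k$. The square root is the power series with constant term $1$. *)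

theory Defs
  imports "HOL-Library.Sublist" "HOL-Computational_Algebra.Formal_Power_Series"
begin

text \<open>Inversion sequences of length n, as 0-indexed lists: entry at position i
  (i.e. a_(i+1) in the paper) satisfies 0 \<le> a_(i+1) < i+1.\<close>
definition inv_seq :: "nat list \<Rightarrow> bool" where
  "inv_seq xs \<longleftrightarrow> (\<forall>i < length xs. xs ! i < Suc i)"

definition reduction :: "nat list \<Rightarrow> nat list" where
  "reduction xs = map (\<lambda>x. card {y \<in> set xs. y < x}) xs"

definition contains_pat :: "nat list \<Rightarrow> nat list \<Rightarrow> bool" where
  "contains_pat xs \<sigma> \<longleftrightarrow> (\<exists>ys. subseq ys xs \<and> reduction ys = \<sigma>)"

definition avoids :: "nat list \<Rightarrow> nat list \<Rightarrow> bool" where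
  "avoids xs \<sigma> \<longleftrightarrow> \<not> contains_pat xs \<sigma>"

definition I_count :: "nat \<Rightarrow> nat" where
  "I_count n = card {xs. length xs = n \<and> inv_seq xs \<and>
      avoids xs [1,0,2] \<and> avoids xs [2,0,1] \<and> avoids xs [2,1,0]}"

end

theory Submission
  imports Defs
begin

unbundle fps_syntax

text \<open>
  A sequence avoids 102, 201 and 210 iff after any inversion \<open>a > b\<close> only the values \<open>a\<close>
  and \<open>b\<close> occur. So a weakly increasing sequence can be extended by any value, whereas an
  unsorted avoider admits one or two next values, and appending one of them leaves this set
  unchanged. Let \<open>C\<^sub>n\<close> count the weakly increasing inversion sequences (Catalan numbers, via
  ballot numbers), \<open>U\<^sub>n = I\<^sub>n - C\<^sub>n\<close> the unsorted avoiders and \<open>B\<^sub>n\<close> those admitting two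
  next values. Then \<open>I\<^sub>n\<^sub>+\<^sub>1 = (n + 1) C\<^sub>n + U\<^sub>n + B\<^sub>n\<close> and \<open>B\<^sub>n\<^sub>+\<^sub>1 = 2 B\<^sub>n + E\<^sub>n\<close>, where \<open>E\<^sub>n\<close>
  counts the sorted sequences together with a next value that makes them unsorted with two
  admissible values; it satisfies \<open>E\<^sub>n\<^sub>+\<^sub>1 + 2 C\<^sub>n\<^sub>+\<^sub>1 = E\<^sub>n + C\<^sub>n\<^sub>+\<^sub>2\<close>. For the generating
  functions these are linear equations over \<open>C(z) = 1 + z C(z)\<^sup>2\<close>, whose solution is the
  stated formula with \<open>\<surd>(1 - 4z) = 1 - 2z C(z)\<close>.
\<close>

lemma card_three_below: "card {y \<in> set [a, b, c]. y < x} = card ({a, b, c} \<inter> {..<x})"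
  by (rule arg_cong[where f = card]) auto

lemma reduction_in_102_201_210_iff:
  "reduction [a, b, c] \<in> {[1,0,2], [2,0,1], [2,1,0]} \<longleftrightarrow> b < a \<and> c \<noteq> a \<and> c \<noteq> (b::nat)"
  unfolding reduction_def card_three_below
  by (cases a b rule: linorder_cases; cases a c rule: linorder_cases; cases b c rule: linorder_cases)
     (auto simp: Int_insert_left card_insert_if)

lemma length_reduction [simp]: "length (reduction xs) = length xs"
  by (simp add: reduction_def)

lemma contains_pat_length3:
  assumes "length \<sigma> = 3"
  shows "contains_pat xs \<sigma> \<longleftrightarrow> (\<exists>a b c. subseq [a, b, c] xs \<and> reduction [a, b, c] = \<sigma>)"
proof
  assume "contains_pat xs \<sigma>"
  then obtain ys where "subseq ys xs" "reduction ys = \<sigma>"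
    unfolding contains_pat_def by blast
  moreover from this have "length ys = 3" using assms by auto
  ultimately show "\<exists>a b c. subseq [a, b, c] xs \<and> reduction [a, b, c] = \<sigma>"
    by (auto simp: length_Suc_conv numeral_3_eq_3)
qed (auto simp: contains_pat_def)

definition pattern_free :: "nat list \<Rightarrow> bool" where
  "pattern_free xs \<longleftrightarrow> (\<forall>a b c. subseq [a, b, c] xs \<longrightarrow> b < a \<longrightarrow> c = a \<or> c = b)"

lemma avoids_102_201_210_iff:
  "avoids xs [1,0,2] \<and> avoids xs [2,0,1] \<and> avoids xs [2,1,0] \<longleftrightarrow> pattern_free xs"
proof -
  have "(b < a \<longrightarrow> c = a \<or> c = b) \<longleftrightarrow> reduction [a, b, c] \<notin> {[1,0,2], [2,0,1], [2,1,0]}"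
    for a b c :: nat
    using reduction_in_102_201_210_iff by blast
  then show ?thesis
    unfolding avoids_def pattern_free_def by (auto simp: contains_pat_length3)
qed

lemma subseq_snoc_iff:
  "subseq ys (xs @ [x]) \<longleftrightarrow> subseq ys xs \<or> (\<exists>zs. ys = zs @ [x] \<and> subseq zs xs)"
proof
  assume "subseq ys (xs @ [x])"
  then obtain ys1 ys2 where ys: "ys = ys1 @ ys2" "subseq ys1 xs" "subseq ys2 [x]"
    by (auto simp only: subseq_append_iff)
  moreover have "ys2 = [] \<or> ys2 = [x]"
    using ys(3) by (cases ys2) (auto split: if_splits)
  ultimately show "subseq ys xs \<or> (\<exists>zs. ys = zs @ [x] \<and> subseq zs xs)" by auto
qed (auto intro: subseq_rev_drop_many)

lemma subseq_pair_snoc_iff: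
  "subseq [a, b] (xs @ [x]) \<longleftrightarrow> subseq [a, b] xs \<or> (a \<in> set xs \<and> b = x)"
  unfolding subseq_snoc_iff
  by (auto simp only: append_eq_Cons_conv snoc_eq_iff_butlast subseq_singleton_left)
     (auto simp: subseq_singleton_left)

lemma subseq_triple_snoc_iff:
  "subseq [a, b, c] (xs @ [x]) \<longleftrightarrow> subseq [a, b, c] xs \<or> (subseq [a, b] xs \<and> c = x)"
  unfolding subseq_snoc_iff by (auto simp only: append_eq_Cons_conv snoc_eq_iff_butlast) auto

lemma subseq_pair_Cons_iff:
  "subseq [a, b] (y # ys) \<longleftrightarrow> (a = y \<and> b \<in> set ys) \<or> subseq [a, b] ys"
  by (cases "a = y") (auto simp: subseq_singleton_left dest: subseq_Cons')

lemma subseq_pair_iff_split: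
  "subseq [a, b] xs \<longleftrightarrow> (\<exists>us ws. xs = us @ b # ws \<and> a \<in> set us)"
proof
  show "subseq [a, b] xs \<Longrightarrow> \<exists>us ws. xs = us @ b # ws \<and> a \<in> set us"
  proof (induction xs)
    case (Cons y ys)
    show ?case
    proof (cases "a = y \<and> b \<in> set ys")
      case True
      then obtain us ws where "ys = us @ b # ws" by (meson split_list)
      with True show ?thesis by (intro exI[of _ "y # us"] exI[of _ ws]) auto
    next
      case False
      then have "subseq [a, b] ys" using Cons.prems by (simp only: subseq_pair_Cons_iff) blast
      then obtain us ws where "ys = us @ b # ws \<and> a \<in> set us" using Cons.IH by blast
      then show ?thesis by (intro exI[of _ "y # us"] exI[of _ ws]) auto
    qed
  qed simp
next
  assume "\<exists>us ws. xs = us @ b # ws \<and> a \<in> set us"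
  then obtain us ws where "xs = us @ b # ws" "subseq [a] us"
    by (auto simp: subseq_singleton_left)
  then show "subseq [a, b] xs"
    using list_emb_append_mono[of "(=)" "[a]" us "[b]" "b # ws"] by simp
qed

lemma subseq_triple_if_split:
  assumes "xs = us @ b # ws" "a \<in> set us" "c \<in> set ws"
  shows "subseq [a, b, c] xs"
proof -
  have "subseq [a] us" "subseq [b, c] (b # ws)"
    using assms(2,3) by (auto simp: subseq_singleton_left)
  then show ?thesis
    using assms(1) list_emb_append_mono[of "(=)" "[a]" us "[b, c]" "b # ws"] by simp
qed

lemma sorted_iff_subseq_pair:
  "sorted xs \<longleftrightarrow> (\<forall>a b. subseq [a, b] xs \<longrightarrow> a \<le> (b::'a::linorder))"
proof (induction xs)
  case (Cons y ys)
  then show ?case by (simp only: sorted_simps subseq_pair_Cons_iff) blast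
qed simp

definition inversion :: "nat list \<Rightarrow> nat \<Rightarrow> nat \<Rightarrow> bool" where
  "inversion xs a b \<longleftrightarrow> subseq [a, b] xs \<and> b < a"

definition allowed :: "nat list \<Rightarrow> nat set" where
  "allowed xs = {x. \<forall>a b. inversion xs a b \<longrightarrow> x = a \<or> x = b}"

lemma pattern_free_snoc_iff: "pattern_free (xs @ [x]) \<longleftrightarrow> pattern_free xs \<and> x \<in> allowed xs"
  unfolding pattern_free_def allowed_def inversion_def subseq_triple_snoc_iff by auto

lemma inversion_snoc_iff:
  "inversion (xs @ [x]) a b \<longleftrightarrow> inversion xs a b \<or> (a \<in> set xs \<and> b = x \<and> x < a)"
  unfolding inversion_def subseq_pair_snoc_iff by auto

lemma allowed_snoc: "allowed (xs @ [x]) = allowed xs \<inter> {z. \<forall>a\<in>set xs. x < a \<longrightarrow> z = a \<or> z = x}"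
  unfolding allowed_def inversion_snoc_iff by blast

lemma sorted_iff_no_inversion: "sorted xs \<longleftrightarrow> (\<nexists>a b. inversion xs a b)"
  unfolding sorted_iff_subseq_pair inversion_def by (meson not_le)

lemma allowed_sorted: "sorted xs \<Longrightarrow> allowed xs = UNIV"
  using sorted_iff_no_inversion unfolding allowed_def by blast

lemma pattern_free_sorted:
  assumes "sorted xs"
  shows "pattern_free xs"
proof -
  have "subseq [a, b] xs" if "subseq [a, b, c] xs" for a b c :: nat
    using that subseq_order.order_trans[of "[a, b]" "[a, b, c]" xs] by simp
  then show ?thesis
    using assms unfolding pattern_free_def sorted_iff_subseq_pair by (meson leD)
qed

lemma inversion_in_set: "inversion xs a b \<Longrightarrow> a \<in> set xs \<and> b \<in> set xs"
  unfolding inversion_def subseq_pair_iff_split by auto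

lemma allowed_subset_inversion: "inversion xs a b \<Longrightarrow> allowed xs \<subseteq> {a, b}"
  unfolding allowed_def by blast

lemma last_in_allowed:
  assumes "pattern_free xs" "xs \<noteq> []"
  shows "last xs \<in> allowed xs"
proof -
  obtain ys y where xs: "xs = ys @ [y]"
    using assms(2) by (metis append_butlast_last_id)
  have "y = a \<or> y = b" if "inversion xs a b" for a b
  proof (cases "subseq [a, b] ys")
    case True
    then have "subseq [a, b, y] xs" unfolding xs subseq_triple_snoc_iff by simp
    then show ?thesis using assms(1) that unfolding pattern_free_def inversion_def by blast
  next
    case False
    then show ?thesis using that unfolding xs inversion_def subseq_pair_snoc_iff by simp
  qed
  then show ?thesis unfolding allowed_def xs by simp
qed

text \<open>If \<open>z \<noteq> x\<close> are both admissible, they are the two values of any inversion \<open>(a\<^sub>1, b\<^sub>1)\<close>; a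
  larger value \<open>a > x\<close> occurring before \<open>b\<^sub>1\<close> forms an inversion with \<open>b\<^sub>1\<close>, and one occurring
  after \<open>b\<^sub>1\<close> completes a triple with \<open>a\<^sub>1, b\<^sub>1\<close>; either way \<open>a = z\<close>.\<close>

lemma allowed_snoc_unsorted:
  assumes "pattern_free xs" "\<not> sorted xs" "x \<in> allowed xs"
  shows "allowed (xs @ [x]) = allowed xs"
proof -
  have "z = a" if z: "z \<in> allowed xs" "z \<noteq> x" and a: "a \<in> set xs" "x < a" for z a
  proof -
    obtain a1 b1 where ab1: "inversion xs a1 b1"
      using assms(2) sorted_iff_no_inversion by blast
    then have xz: "{x, z} = {a1, b1}"
      using allowed_subset_inversion[OF ab1] assms(3) z by auto
    have "subseq [a1, b1] xs" "b1 < a1" using ab1 unfolding inversion_def by simp_all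
    with xz a(2) have b1: "b1 \<le> x" "b1 < a" by (auto simp: doubleton_eq_iff)
    obtain us ws where xs: "xs = us @ b1 # ws" "a1 \<in> set us"
      using \<open>subseq [a1, b1] xs\<close> unfolding subseq_pair_iff_split by blast
    consider "a \<in> set us" | "a = b1" | "a \<in> set ws" using a(1) unfolding xs(1) by auto
    then show ?thesis
    proof cases
      case 1
      have "subseq [a, b1] xs"
        unfolding subseq_pair_iff_split by (intro exI[of _ us] exI[of _ ws]) (simp add: xs(1) 1)
      then have "allowed xs \<subseteq> {a, b1}"
        using b1(2) allowed_subset_inversion unfolding inversion_def by blast
      then show ?thesis using assms(3) z a(2) by auto
    next
      case 3
      have "a = a1 \<or> a = b1"
        using assms(1) subseq_triple_if_split[OF xs 3] \<open>b1 < a1\<close> unfolding pattern_free_def by blast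
      then show ?thesis using xz z(2) a(2) b1 by (auto simp: doubleton_eq_iff)
    qed (use b1 in simp)
  qed
  then have "allowed xs \<subseteq> {z. \<forall>a\<in>set xs. x < a \<longrightarrow> z = a \<or> z = x}" by blast
  then show ?thesis unfolding allowed_snoc by (rule Int_absorb2)
qed

lemma allowed_unsorted:
  assumes "pattern_free xs" "\<not> sorted xs"
  shows "allowed xs \<subseteq> set xs" "card (allowed xs) \<in> {1, 2}"
proof -
  obtain a b where ab: "inversion xs a b" using assms(2) sorted_iff_no_inversion by blast
  then show sub: "allowed xs \<subseteq> set xs"
    using allowed_subset_inversion inversion_in_set by blast
  have "card (allowed xs) \<le> card {a, b}"
    by (rule card_mono) (auto simp: allowed_subset_inversion[OF ab])
  also have "\<dots> \<le> 2" by (simp add: card_insert_le_m1)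
  finally have "card (allowed xs) \<le> 2" .
  moreover have "allowed xs \<noteq> {}"
    using last_in_allowed[OF assms(1)] assms(2) by fastforce
  then have "card (allowed xs) \<ge> 1"
    using sub by (simp add: Suc_leI card_gt_0_iff finite_subset)
  ultimately show "card (allowed xs) \<in> {1, 2}" by auto
qed

definition last0 :: "nat list \<Rightarrow> nat" where
  "last0 xs = (if xs = [] then 0 else last xs)"

lemma last0_snoc [simp]: "last0 (xs @ [x]) = x"
  by (simp add: last0_def)

lemma sorted_all_le_iff: "sorted xs \<Longrightarrow> (\<forall>a\<in>set xs. a \<le> y) \<longleftrightarrow> last0 xs \<le> y"
  unfolding last0_def by (cases xs rule: rev_cases) (auto simp: sorted_append)

lemma sorted_le_last0: "sorted xs \<Longrightarrow> a \<in> set xs \<Longrightarrow> a \<le> last0 xs"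
  using sorted_all_le_iff by blast

lemma sorted_snoc_iff: "sorted xs \<Longrightarrow> sorted (xs @ [x]) \<longleftrightarrow> last0 xs \<le> x"
  by (simp add: sorted_append sorted_all_le_iff)

lemma allowed_sorted_snoc:
  "sorted xs \<Longrightarrow> allowed (xs @ [x]) = {z. \<forall>a\<in>set xs. x < a \<longrightarrow> z = a \<or> z = x}"
  unfolding allowed_snoc by (simp add: allowed_sorted)

lemma card_allowed_sorted_snoc:
  assumes "sorted xs" "x < last0 xs"
  shows "card (allowed (xs @ [x])) = 2 \<longleftrightarrow> (\<forall>a\<in>set xs. a \<le> x \<or> a = last0 xs)"
proof -
  have last: "last0 xs \<in> set xs"
    using assms(2) unfolding last0_def by (auto split: if_splits)
  show ?thesis
  proof
    assume two: "card (allowed (xs @ [x])) = 2"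
    show "\<forall>a\<in>set xs. a \<le> x \<or> a = last0 xs"
    proof (rule ccontr)
      assume "\<not> (\<forall>a\<in>set xs. a \<le> x \<or> a = last0 xs)"
      then obtain a where a: "a \<in> set xs" "x < a" "a \<noteq> last0 xs" by auto
      have "allowed (xs @ [x]) \<subseteq> {x}"
      proof
        fix z assume "z \<in> allowed (xs @ [x])"
        then have "z = a \<or> z = x" "z = last0 xs \<or> z = x"
          using a(1,2) last assms(2) unfolding allowed_sorted_snoc[OF assms(1)] by auto
        then show "z \<in> {x}" using a(3) by auto
      qed
      then have "card (allowed (xs @ [x])) \<le> 1" using card_mono[of "{x}"] by fastforce
      then show False using two by simp
    qed
  next
    assume "\<forall>a\<in>set xs. a \<le> x \<or> a = last0 xs"
    then have "allowed (xs @ [x]) = {x, last0 xs}"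
      using last assms(2) by (auto simp: allowed_sorted_snoc[OF assms(1)])
    then show "card (allowed (xs @ [x])) = 2" using assms(2) by simp
  qed
qed

lemma inv_seq_snoc_iff: "inv_seq (xs @ [x]) \<longleftrightarrow> inv_seq xs \<and> x \<le> length xs"
  unfolding inv_seq_def by (auto simp: nth_append less_Suc_eq)

lemma inv_seq_less_length: "inv_seq xs \<Longrightarrow> y \<in> set xs \<Longrightarrow> y < length xs"
  unfolding inv_seq_def in_set_conv_nth by (metis less_trans_Suc not_less_eq)

lemma last0_less_length: "inv_seq xs \<Longrightarrow> xs \<noteq> [] \<Longrightarrow> last0 xs < length xs"
  unfolding last0_def using inv_seq_less_length by simp

lemma finite_inv_seqs: "finite {xs. length xs = n \<and> inv_seq xs \<and> P xs}"
proof (rule finite_subset)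
  show "{xs. length xs = n \<and> inv_seq xs \<and> P xs} \<subseteq> {xs. set xs \<subseteq> {..<n} \<and> length xs = n}"
    using inv_seq_less_length by blast
qed (simp add: finite_lists_length_eq)

lemma sum_lists_length_Suc:
  assumes "finite {xs. length xs = n \<and> Q xs}" "\<And>xs x. P (xs @ [x]) \<Longrightarrow> Q xs"
    and "\<And>xs. length xs = n \<Longrightarrow> Q xs \<Longrightarrow> finite {x. P (xs @ [x])}"
  shows "sum f {ys. length ys = Suc n \<and> P ys} =
    (\<Sum>xs | length xs = n \<and> Q xs. \<Sum>x | P (xs @ [x]). f (xs @ [x]))"
proof -
  let ?S = "SIGMA xs:{xs. length xs = n \<and> Q xs}. {x. P (xs @ [x])}"
  let ?snoc = "\<lambda>(xs, x). xs @ [x]"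
  have "{ys. length ys = Suc n \<and> P ys} = ?snoc ` ?S"
  proof (intro equalityI subsetI)
    fix ys assume ys: "ys \<in> {ys. length ys = Suc n \<and> P ys}"
    then have "ys \<noteq> []" by auto
    then have "ys = butlast ys @ [last ys]" by simp
    moreover from this have "(butlast ys, last ys) \<in> ?S"
      using ys assms(2)[of "butlast ys" "last ys"] by auto
    ultimately show "ys \<in> ?snoc ` ?S" by force
  qed (auto simp: assms(2))
  moreover have "inj_on ?snoc ?S" by (auto simp: inj_on_def)
  ultimately have "sum f {ys. length ys = Suc n \<and> P ys} = sum (f \<circ> ?snoc) ?S"
    by (simp add: sum.reindex)
  also have "\<dots> = (\<Sum>(xs, x)\<in>?S. f (xs @ [x]))"
    by (simp add: case_prod_unfold)
  also have "\<dots> = (\<Sum>xs | length xs = n \<and> Q xs. \<Sum>x | P (xs @ [x]). f (xs @ [x]))"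
    by (rule sum.Sigma[symmetric]) (auto simp: assms(1,3))
  finally show ?thesis .
qed

lemma sum_inv_seqs_Suc:
  assumes "\<And>xs x. S (xs @ [x]) \<Longrightarrow> inv_seq (xs @ [x]) \<Longrightarrow> R xs"
  shows "sum f {ys. length ys = Suc n \<and> inv_seq ys \<and> S ys} =
    (\<Sum>xs | length xs = n \<and> inv_seq xs \<and> R xs.
       \<Sum>x | inv_seq (xs @ [x]) \<and> S (xs @ [x]). f (xs @ [x]))"
proof (rule sum_lists_length_Suc)
  show "finite {xs. length xs = n \<and> inv_seq xs \<and> R xs}" by (rule finite_inv_seqs)
  show "inv_seq xs \<and> R xs" if "inv_seq (xs @ [x]) \<and> S (xs @ [x])" for xs x
    using that assms inv_seq_snoc_iff by blast
  show "finite {x. inv_seq (xs @ [x]) \<and> S (xs @ [x])}" for xs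
    by (rule finite_subset[of _ "{..length xs}"]) (auto simp: inv_seq_snoc_iff)
qed

definition sorted_inv_seqs :: "nat \<Rightarrow> nat list set" where
  "sorted_inv_seqs n = {xs. length xs = n \<and> inv_seq xs \<and> sorted xs}"

definition avoiders :: "nat \<Rightarrow> nat list set" where
  "avoiders n = {xs. length xs = n \<and> inv_seq xs \<and> pattern_free xs}"

definition unsorted_avoiders :: "nat \<Rightarrow> nat list set" where
  "unsorted_avoiders n = {xs. length xs = n \<and> inv_seq xs \<and> pattern_free xs \<and> \<not> sorted xs}"

definition branching :: "nat list \<Rightarrow> bool" where
  "branching xs \<longleftrightarrow> pattern_free xs \<and> \<not> sorted xs \<and> card (allowed xs) = 2"

definition branching_avoiders :: "nat \<Rightarrow> nat list set" where
  "branching_avoiders n = {xs. length xs = n \<and> inv_seq xs \<and> branching xs}"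

text \<open>The number of values whose appending to the sorted sequence \<open>xs\<close> yields a branching one.\<close>

definition branching_extensions :: "nat list \<Rightarrow> nat" where
  "branching_extensions xs = card {x. x < last0 xs \<and> (\<forall>a\<in>set xs. a \<le> x \<or> a = last0 xs)}"

lemma finite_sequence_sets [simp]:
  "finite (sorted_inv_seqs n)" "finite (avoiders n)" "finite (unsorted_avoiders n)"
  "finite (branching_avoiders n)"
  unfolding sorted_inv_seqs_def avoiders_def unsorted_avoiders_def branching_avoiders_def
  by (simp_all only: finite_inv_seqs)

lemma I_count_eq_card_avoiders: "I_count n = card (avoiders n)"
  unfolding I_count_def avoiders_def avoids_102_201_210_iff by simp

lemma avoiders_eq_Un: "avoiders n = sorted_inv_seqs n \<union> unsorted_avoiders n"
  unfolding avoiders_def sorted_inv_seqs_def unsorted_avoiders_def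
  using pattern_free_sorted by auto

lemma sum_avoiders:
  "sum f (avoiders n) = sum f (sorted_inv_seqs n) + sum f (unsorted_avoiders n)"
  unfolding avoiders_eq_Un sorted_inv_seqs_def unsorted_avoiders_def
  by (rule sum.union_disjoint) (auto simp: finite_inv_seqs)

lemma card_avoiders: "card (avoiders n) = card (sorted_inv_seqs n) + card (unsorted_avoiders n)"
  unfolding card_eq_sum by (rule sum_avoiders)

lemma branching_avoiders_eq:
  "branching_avoiders n = {xs \<in> unsorted_avoiders n. card (allowed xs) = 2}"
  unfolding branching_avoiders_def unsorted_avoiders_def branching_def by auto

lemma sum_unsorted_avoiders_branching:
  "(\<Sum>xs\<in>unsorted_avoiders n. if card (allowed xs) = 2 then c else 0) = c * card (branching_avoiders n)"
  unfolding branching_avoiders_eq by (simp add: sum.inter_filter[symmetric])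

lemma last0_sorted_inv_seqs: "xs \<in> sorted_inv_seqs n \<Longrightarrow> last0 xs \<le> n"
  unfolding sorted_inv_seqs_def using last0_less_length by (fastforce simp: last0_def)

lemma sorted_inv_seqs_0: "sorted_inv_seqs 0 = {[]}"
  unfolding sorted_inv_seqs_def by (auto simp: inv_seq_def)

lemma avoiders_0: "avoiders 0 = {[]}"
  unfolding avoiders_def by (auto simp: inv_seq_def pattern_free_def)

lemma sum_sorted_inv_seqs_Suc:
  "sum f (sorted_inv_seqs (Suc n)) = (\<Sum>xs\<in>sorted_inv_seqs n. \<Sum>x=last0 xs..n. f (xs @ [x]))"
proof -
  have "sum f (sorted_inv_seqs (Suc n)) = (\<Sum>xs\<in>sorted_inv_seqs n.
      \<Sum>x | inv_seq (xs @ [x]) \<and> sorted (xs @ [x]). f (xs @ [x]))"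
    unfolding sorted_inv_seqs_def by (rule sum_inv_seqs_Suc) (simp add: sorted_append)
  also have "\<dots> = (\<Sum>xs\<in>sorted_inv_seqs n. \<Sum>x=last0 xs..n. f (xs @ [x]))"
    by (intro sum.cong refl arg_cong2[where f = sum])
       (auto simp: sorted_inv_seqs_def inv_seq_snoc_iff sorted_snoc_iff)
  finally show ?thesis .
qed

lemma card_sorted_inv_seqs_Suc:
  "card (sorted_inv_seqs (Suc n)) = (\<Sum>xs\<in>sorted_inv_seqs n. Suc n - last0 xs)"
  unfolding card_eq_sum sum_sorted_inv_seqs_Suc by simp

lemma branching_extensions_snoc:
  assumes "sorted xs" "last0 xs \<le> x"
  shows "branching_extensions (xs @ [x]) =
    (if x = last0 xs then branching_extensions xs else 0) + (x - last0 xs)"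
proof (cases "x = last0 xs")
  case True
  then show ?thesis unfolding branching_extensions_def by (simp cong: conj_cong)
next
  case False
  then have "\<forall>a\<in>set xs. a \<noteq> x" using sorted_le_last0[OF assms(1)] assms(2) by fastforce
  then have "{y. y < x \<and> (\<forall>a\<in>set (xs @ [x]). a \<le> y \<or> a = x)} = {last0 xs..<x}"
    using sorted_all_le_iff[OF assms(1)] by auto
  then show ?thesis using False unfolding branching_extensions_def by simp
qed

lemma sum_diff_add_twice_card:
  "v \<le> n \<Longrightarrow> (\<Sum>x=v..n. x - v) + 2 * (Suc n - v) = (\<Sum>x=v..n. Suc (Suc n) - x)"
proof -
  assume "v \<le> n"
  have "(\<Sum>x=v..n. x - v) + 2 * (Suc n - v) = (\<Sum>x=v..n. x - v + 2)"
    by (simp only: sum.distrib) simp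
  also have "\<dots> = (\<Sum>x=v..n. n + v - x - v + 2)"
    by (rule sum.atLeastAtMost_rev)
  also have "\<dots> = (\<Sum>x=v..n. Suc (Suc n) - x)"
    by (rule sum.cong) auto
  finally show ?thesis .
qed

lemma sum_branching_extensions_Suc:
  "(\<Sum>xs\<in>sorted_inv_seqs (Suc n). branching_extensions xs) + 2 * card (sorted_inv_seqs (Suc n)) =
   (\<Sum>xs\<in>sorted_inv_seqs n. branching_extensions xs) + card (sorted_inv_seqs (Suc (Suc n)))"
proof -
  have ext: "(\<Sum>x=last0 xs..n. branching_extensions (xs @ [x])) =
      branching_extensions xs + (\<Sum>x=last0 xs..n. x - last0 xs)"
    if xs: "xs \<in> sorted_inv_seqs n" for xs
  proof -
    have sorted: "sorted xs" and last: "last0 xs \<le> n"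
      using xs last0_sorted_inv_seqs unfolding sorted_inv_seqs_def by auto
    have "(\<Sum>x=last0 xs..n. branching_extensions (xs @ [x])) = (\<Sum>x=last0 xs..n.
        (if x = last0 xs then branching_extensions xs else 0) + (x - last0 xs))"
      by (rule sum.cong) (simp_all add: branching_extensions_snoc[OF sorted])
    also have "\<dots> = branching_extensions xs + (\<Sum>x=last0 xs..n. x - last0 xs)"
      using last by (simp only: sum.distrib) (simp add: sum.delta)
    finally show ?thesis .
  qed
  have "(\<Sum>xs\<in>sorted_inv_seqs (Suc n). branching_extensions xs) + 2 * card (sorted_inv_seqs (Suc n))
      = (\<Sum>xs\<in>sorted_inv_seqs n. branching_extensions xs +
          ((\<Sum>x=last0 xs..n. x - last0 xs) + 2 * (Suc n - last0 xs)))"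
    by (simp add: sum_sorted_inv_seqs_Suc card_sorted_inv_seqs_Suc ext sum.distrib
        sum_distrib_left add.assoc)
  also have "\<dots> = (\<Sum>xs\<in>sorted_inv_seqs n. branching_extensions xs +
      (\<Sum>x=last0 xs..n. Suc (Suc n) - x))"
    by (intro sum.cong refl) (simp add: sum_diff_add_twice_card last0_sorted_inv_seqs)
  also have "\<dots> = (\<Sum>xs\<in>sorted_inv_seqs n. branching_extensions xs) + card (sorted_inv_seqs (Suc (Suc n)))"
    by (simp add: sum.distrib card_sorted_inv_seqs_Suc sum_sorted_inv_seqs_Suc)
  finally show ?thesis .
qed

lemma avoider_extensions_sorted:
  assumes "xs \<in> sorted_inv_seqs n"
  shows "{x. inv_seq (xs @ [x]) \<and> pattern_free (xs @ [x])} = {..n}"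
  using assms pattern_free_sorted allowed_sorted
  by (auto simp: sorted_inv_seqs_def inv_seq_snoc_iff pattern_free_snoc_iff)

lemma avoider_extensions_unsorted:
  assumes "xs \<in> unsorted_avoiders n"
  shows "{x. inv_seq (xs @ [x]) \<and> pattern_free (xs @ [x])} = allowed xs"
  using assms allowed_unsorted(1) inv_seq_less_length
  by (fastforce simp: unsorted_avoiders_def inv_seq_snoc_iff pattern_free_snoc_iff)

lemma card_branching_extensions_sorted:
  assumes "xs \<in> sorted_inv_seqs n"
  shows "card {x. inv_seq (xs @ [x]) \<and> branching (xs @ [x])} = branching_extensions xs"
proof -
  have xs: "length xs = n" "inv_seq xs" "sorted xs" "last0 xs \<le> n"
    using assms last0_sorted_inv_seqs unfolding sorted_inv_seqs_def by auto
  have "{x. inv_seq (xs @ [x]) \<and> branching (xs @ [x])} =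
      {x. x < last0 xs \<and> (\<forall>a\<in>set xs. a \<le> x \<or> a = last0 xs)}"
    using xs pattern_free_sorted allowed_sorted card_allowed_sorted_snoc[OF xs(3)]
    by (auto simp: branching_def inv_seq_snoc_iff pattern_free_snoc_iff sorted_snoc_iff)
  then show ?thesis unfolding branching_extensions_def by simp
qed

lemma card_branching_extensions_unsorted:
  assumes "xs \<in> unsorted_avoiders n"
  shows "card {x. inv_seq (xs @ [x]) \<and> branching (xs @ [x])} =
    (if card (allowed xs) = 2 then 2 else 0)"
proof -
  have xs: "pattern_free xs" "\<not> sorted xs"
    using assms unfolding unsorted_avoiders_def by auto
  then have "\<not> sorted (xs @ [x])" for x by (auto simp: sorted_append)
  then have "{x. inv_seq (xs @ [x]) \<and> branching (xs @ [x])} =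
      {x. inv_seq (xs @ [x]) \<and> pattern_free (xs @ [x]) \<and> card (allowed xs) = 2}"
    using allowed_snoc_unsorted[OF xs] by (auto simp: branching_def pattern_free_snoc_iff)
  then show ?thesis using avoider_extensions_unsorted[OF assms] by simp
qed

lemma card_branching_avoiders_Suc:
  "card (branching_avoiders (Suc n)) =
    (\<Sum>xs\<in>sorted_inv_seqs n. branching_extensions xs) + 2 * card (branching_avoiders n)"
proof -
  let ?ext = "\<lambda>xs. card {x. inv_seq (xs @ [x]) \<and> branching (xs @ [x])}"
  have "card (branching_avoiders (Suc n)) = (\<Sum>xs\<in>avoiders n. ?ext xs)"
    using sum_inv_seqs_Suc[of branching pattern_free "\<lambda>_. 1::nat" n]
    by (simp add: branching_avoiders_def avoiders_def branching_def pattern_free_snoc_iff)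
  also have "\<dots> = (\<Sum>xs\<in>sorted_inv_seqs n. ?ext xs) + (\<Sum>xs\<in>unsorted_avoiders n. ?ext xs)"
    by (rule sum_avoiders)
  also have "\<dots> = (\<Sum>xs\<in>sorted_inv_seqs n. branching_extensions xs) + 2 * card (branching_avoiders n)"
    by (simp add: card_branching_extensions_sorted card_branching_extensions_unsorted
        sum_unsorted_avoiders_branching cong: sum.cong)
  finally show ?thesis .
qed

lemma card_avoiders_Suc:
  "card (avoiders (Suc n)) =
    Suc n * card (sorted_inv_seqs n) + card (unsorted_avoiders n) + card (branching_avoiders n)"
proof -
  let ?ext = "\<lambda>xs. card {x. inv_seq (xs @ [x]) \<and> pattern_free (xs @ [x])}"
  have "card (avoiders (Suc n)) = (\<Sum>xs\<in>avoiders n. ?ext xs)"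
    using sum_inv_seqs_Suc[of pattern_free pattern_free "\<lambda>_. 1::nat" n]
    by (simp add: avoiders_def pattern_free_snoc_iff)
  also have "\<dots> = (\<Sum>xs\<in>sorted_inv_seqs n. ?ext xs) + (\<Sum>xs\<in>unsorted_avoiders n. ?ext xs)"
    by (rule sum_avoiders)
  also have "(\<Sum>xs\<in>unsorted_avoiders n. ?ext xs) =
      (\<Sum>xs\<in>unsorted_avoiders n. 1 + (if card (allowed xs) = 2 then 1 else 0))"
    using allowed_unsorted(2) avoider_extensions_unsorted
    by (intro sum.cong refl) (fastforce simp: unsorted_avoiders_def)
  also have "\<dots> = card (unsorted_avoiders n) + card (branching_avoiders n)"
    by (simp only: sum.distrib sum_unsorted_avoiders_branching mult_1 card_eq_sum[symmetric])
  also have "(\<Sum>xs\<in>sorted_inv_seqs n. ?ext xs) = Suc n * card (sorted_inv_seqs n)"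
    by (simp add: avoider_extensions_sorted)
  finally show ?thesis by (simp only: add.assoc)
qed

text \<open>The sorted inversion sequences of length \<open>l\<close> ending in \<open>d\<close> are counted by the ballot
  number \<open>[z\<^sup>l] (z C(z))\<^sup>l\<^sup>-\<^sup>d\<close>: both satisfy \<open>T(l + 1, d) = \<Sum>\<^sub>w\<^sub>\<le>\<^sub>d T(l, w)\<close>
  for \<open>d \<le> l\<close>.\<close>

definition sorted_count_last :: "nat \<Rightarrow> nat \<Rightarrow> nat" where
  "sorted_count_last l d = card {xs \<in> sorted_inv_seqs l. last0 xs = d}"

lemma card_sorted_inv_seqs_last_le:
  "card {xs \<in> sorted_inv_seqs l. last0 xs \<le> d} = (\<Sum>w\<le>d. sorted_count_last l w)"
proof -
  have "{xs \<in> sorted_inv_seqs l. last0 xs \<le> d} = (\<Union>w\<le>d. {xs \<in> sorted_inv_seqs l. last0 xs = w})"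
    by auto
  then show ?thesis unfolding sorted_count_last_def
    by (simp only:) (rule card_UN_disjoint, auto)
qed

lemma card_sorted_inv_seqs_eq_sum: "card (sorted_inv_seqs n) = (\<Sum>d\<le>n. sorted_count_last n d)"
proof -
  have "sorted_inv_seqs n = {xs \<in> sorted_inv_seqs n. last0 xs \<le> n}"
    using last0_sorted_inv_seqs by auto
  then show ?thesis by (metis card_sorted_inv_seqs_last_le)
qed

lemma sorted_count_last_Suc:
  assumes "d \<le> l"
  shows "sorted_count_last (Suc l) d = (\<Sum>w\<le>d. sorted_count_last l w)"
proof -
  have "sorted_count_last (Suc l) d =
      (\<Sum>xs\<in>sorted_inv_seqs (Suc l). if last0 xs = d then 1 else 0)"
    unfolding sorted_count_last_def by (simp add: sum.inter_filter[symmetric])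
  also have "\<dots> = (\<Sum>xs\<in>sorted_inv_seqs l. \<Sum>x=last0 xs..l. if x = d then 1 else 0)"
    by (simp only: sum_sorted_inv_seqs_Suc last0_snoc)
  also have "\<dots> = (\<Sum>xs\<in>sorted_inv_seqs l. if last0 xs \<le> d then 1 else 0)"
    using assms by (intro sum.cong refl) (simp add: sum.delta)
  also have "\<dots> = card {xs \<in> sorted_inv_seqs l. last0 xs \<le> d}"
    by (simp add: sum.inter_filter[symmetric])
  finally show ?thesis by (simp only: card_sorted_inv_seqs_last_le)
qed

lemma sorted_count_last_diag: "sorted_count_last (Suc l) (Suc l) = 0"
  unfolding sorted_count_last_def sorted_inv_seqs_def
  using last0_less_length by (fastforce simp: card_eq_0_iff finite_inv_seqs)

fun catalan :: "nat \<Rightarrow> real" where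
  "catalan 0 = 1"
| "catalan (Suc n) = (\<Sum>i\<le>n. catalan i * catalan (n - i))"

definition catalan_fps :: "real fps" where
  "catalan_fps = Abs_fps catalan"

lemma catalan_fps_eq: "catalan_fps = 1 + fps_X * catalan_fps ^ 2"
proof (rule fps_ext)
  fix n show "catalan_fps $ n = (1 + fps_X * catalan_fps ^ 2) $ n"
  proof (cases n)
    case (Suc m)
    have "(1 + fps_X * catalan_fps ^ 2) $ n = (catalan_fps * catalan_fps) $ m"
      using Suc by (simp add: power2_eq_square)
    then show ?thesis
      using Suc by (simp add: fps_mult_nth catalan_fps_def atLeast0AtMost)
  qed (simp add: catalan_fps_def)
qed

definition X_catalan :: "real fps" where
  "X_catalan = fps_X * catalan_fps"

lemma X_catalan_eq: "X_catalan = fps_X + X_catalan ^ 2"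
  unfolding X_catalan_def using catalan_fps_eq by algebra

lemma X_catalan_power_nth_self: "(X_catalan ^ h) $ h = 1"
  unfolding X_catalan_def power_mult_distrib fps_X_power_mult_nth
  by (simp add: fps_power_zeroth catalan_fps_def)

lemma X_catalan_power_Suc: "X_catalan ^ Suc h = fps_X * X_catalan ^ h + X_catalan ^ Suc (Suc h)"
proof -
  have "X_catalan ^ Suc h = X_catalan ^ h * (fps_X + X_catalan ^ 2)"
    by (metis X_catalan_eq power_Suc2)
  then show ?thesis by (simp add: algebra_simps power2_eq_square)
qed

lemma X_catalan_power_nth_Suc:
  "d \<le> l \<Longrightarrow> (X_catalan ^ (Suc l - d)) $ Suc l = (\<Sum>w\<le>d. (X_catalan ^ (l - w)) $ l)"
proof (induction d)
  case 0
  then show ?case by (simp del: power_Suc add: X_catalan_power_nth_self)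
next
  case (Suc d)
  then have "Suc l - Suc d = Suc (l - Suc d)" "Suc (Suc (l - Suc d)) = Suc l - d" by auto
  then have "(X_catalan ^ (Suc l - Suc d)) $ Suc l =
      (X_catalan ^ (l - Suc d)) $ l + (X_catalan ^ (Suc l - d)) $ Suc l"
    by (simp only: X_catalan_power_Suc[of "l - Suc d"] fps_add_nth fps_X_mult_nth) simp
  then show ?case using Suc by simp
qed

lemma sorted_count_last_eq: "d \<le> l \<Longrightarrow> real (sorted_count_last l d) = (X_catalan ^ (l - d)) $ l"
proof (induction l arbitrary: d)
  case 0
  then show ?case by (simp add: sorted_count_last_def sorted_inv_seqs_0 last0_def)
next
  case (Suc l)
  show ?case
  proof (cases "d = Suc l")
    case True
    then show ?thesis by (simp add: sorted_count_last_diag)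
  next
    case False
    then have "d \<le> l" using Suc.prems by simp
    then show ?thesis
      using Suc.IH by (simp add: sorted_count_last_Suc X_catalan_power_nth_Suc)
  qed
qed

lemma sum_X_catalan_powers: "(\<Sum>h\<le>n. X_catalan ^ h) = catalan_fps * (1 - X_catalan ^ Suc n)"
proof -
  have "catalan_fps * (1 - X_catalan) = 1"
    unfolding X_catalan_def using catalan_fps_eq by algebra
  then have "(\<Sum>h\<le>n. X_catalan ^ h) = catalan_fps * ((1 - X_catalan) * (\<Sum>h\<le>n. X_catalan ^ h))"
    by (metis mult.assoc mult_1)
  then show ?thesis by (simp only: sum_gp_basic)
qed

lemma card_sorted_inv_seqs: "real (card (sorted_inv_seqs n)) = catalan_fps $ n"
proof -
  have "real (card (sorted_inv_seqs n)) = (\<Sum>d\<le>n. (X_catalan ^ (n - d)) $ n)"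
    by (simp add: card_sorted_inv_seqs_eq_sum sorted_count_last_eq)
  also have "\<dots> = (\<Sum>h\<le>n. X_catalan ^ h) $ n"
    unfolding fps_sum_nth atMost_atLeast0 by (subst sum.atLeastAtMost_rev) simp
  also have "(\<Sum>h\<le>n. X_catalan ^ h) =
      catalan_fps - fps_X ^ Suc n * (catalan_fps * catalan_fps ^ Suc n)"
    unfolding sum_X_catalan_powers unfolding X_catalan_def power_mult_distrib
    by (simp add: right_diff_distrib mult.left_commute)
  finally show ?thesis by (simp del: power_Suc add: fps_X_power_mult_nth)
qed

definition branching_extensions_fps :: "real fps" where
  "branching_extensions_fps =
    Abs_fps (\<lambda>n. real (\<Sum>xs\<in>sorted_inv_seqs n. branching_extensions xs))"

definition branching_fps :: "real fps" where
  "branching_fps = Abs_fps (\<lambda>n. real (card (branching_avoiders n)))"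

definition avoiders_fps :: "real fps" where
  "avoiders_fps = Abs_fps (\<lambda>n. real (I_count n))"

lemma fps_nth_2_mult: "(2 * f) $ n = 2 * (f $ n :: 'a::semiring_1)"
  by (simp only: mult_2 fps_add_nth)

lemma catalan_fps_deriv: "fps_deriv catalan_fps =
    catalan_fps ^ 2 + fps_X * (2 * catalan_fps * fps_deriv catalan_fps)"
proof -
  have "fps_deriv catalan_fps = fps_deriv (1 + fps_X * catalan_fps ^ 2)"
    by (rule arg_cong[OF catalan_fps_eq])
  then show ?thesis by (simp add: fps_deriv_power' algebra_simps)
qed

lemma branching_extensions_fps_eq: "fps_X * (branching_extensions_fps + 2 * catalan_fps) =
    fps_X ^ 2 * branching_extensions_fps + catalan_fps - 1 + fps_X"
proof (rule fps_ext)
  fix k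
  show "(fps_X * (branching_extensions_fps + 2 * catalan_fps)) $ k =
      (fps_X ^ 2 * branching_extensions_fps + catalan_fps - 1 + fps_X) $ k"
  proof (cases k)
    case (Suc j)
    show ?thesis
    proof (cases j)
      case 0
      then show ?thesis
        using Suc by (simp add: catalan_fps_def fps_X_power_mult_nth branching_extensions_fps_def
            sorted_inv_seqs_0 branching_extensions_def last0_def)
    next
      case (Suc m)
      have "real (\<Sum>xs\<in>sorted_inv_seqs (Suc m). branching_extensions xs)
            + 2 * real (card (sorted_inv_seqs (Suc m))) =
          real (\<Sum>xs\<in>sorted_inv_seqs m. branching_extensions xs)
            + real (card (sorted_inv_seqs (Suc (Suc m))))"
        using sum_branching_extensions_Suc[of m] by (metis of_nat_add of_nat_mult of_nat_numeral)
      then show ?thesis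
        using \<open>k = Suc j\<close> Suc
        by (simp add: fps_X_power_mult_nth branching_extensions_fps_def card_sorted_inv_seqs
            fps_nth_2_mult)
    qed
  qed (simp add: catalan_fps_def fps_X_power_mult_nth)
qed

lemma branching_fps_eq: "branching_fps = fps_X * (2 * branching_fps + branching_extensions_fps)"
proof (rule fps_ext)
  fix k
  show "branching_fps $ k = (fps_X * (2 * branching_fps + branching_extensions_fps)) $ k"
  proof (cases k)
    case 0
    then show ?thesis by (simp add: branching_fps_def branching_avoiders_def branching_def)
  next
    case (Suc m)
    have "real (card (branching_avoiders (Suc m))) =
        real (\<Sum>xs\<in>sorted_inv_seqs m. branching_extensions xs) + 2 * real (card (branching_avoiders m))"
      using card_branching_avoiders_Suc[of m] by simp
    then show ?thesis
      using Suc by (simp add: branching_fps_def branching_extensions_fps_def fps_nth_2_mult)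
  qed
qed

lemma avoiders_fps_eq: "avoiders_fps =
    1 + fps_X * avoiders_fps + fps_X * branching_fps + fps_X ^ 2 * fps_deriv catalan_fps"
proof (rule fps_ext)
  fix k
  show "avoiders_fps $ k =
      (1 + fps_X * avoiders_fps + fps_X * branching_fps + fps_X ^ 2 * fps_deriv catalan_fps) $ k"
  proof (cases k)
    case 0
    then show ?thesis
      by (simp add: avoiders_fps_def I_count_eq_card_avoiders avoiders_0 fps_X_power_mult_nth)
  next
    case (Suc m)
    have "real (I_count (Suc m)) = real (Suc m) * real (card (sorted_inv_seqs m))
        + real (card (unsorted_avoiders m)) + real (card (branching_avoiders m))"
      unfolding I_count_eq_card_avoiders card_avoiders_Suc by (simp add: algebra_simps)
    moreover have "real (I_count m) =
        real (card (sorted_inv_seqs m)) + real (card (unsorted_avoiders m))"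
      unfolding I_count_eq_card_avoiders card_avoiders by simp
    moreover have "(fps_X ^ 2 * fps_deriv catalan_fps) $ Suc m = real m * catalan_fps $ m"
      by (cases m) (simp_all add: fps_X_power_mult_nth)
    ultimately show ?thesis
      using Suc by (simp add: avoiders_fps_def branching_fps_def card_sorted_inv_seqs algebra_simps)
  qed
qed

lemma avoiders_fps_times_denominator:
  "2 * (1 - fps_X) ^ 2 * (1 - 2 * fps_X) * (1 - 4 * fps_X) * avoiders_fps =
    2 - 15 * fps_X + 32 * fps_X ^ 2 - 16 * fps_X ^ 3
      + fps_X * (1 - 2 * fps_X) * (1 + 2 * fps_X) * (1 - 2 * fps_X * catalan_fps)"
proof -
  \<comment> \<open>The equation for \<open>E\<close> only determines \<open>z E\<close>, so the elimination yields the identity times \<open>z\<close>.\<close>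
  have "fps_X * (2 * (1 - fps_X) ^ 2 * (1 - 2 * fps_X) * (1 - 4 * fps_X) * avoiders_fps) =
    fps_X * (2 - 15 * fps_X + 32 * fps_X ^ 2 - 16 * fps_X ^ 3
      + fps_X * (1 - 2 * fps_X) * (1 + 2 * fps_X) * (1 - 2 * fps_X * catalan_fps))"
    using catalan_fps_eq catalan_fps_deriv branching_extensions_fps_eq branching_fps_eq
      avoiders_fps_eq
    by algebra
  then show ?thesis by (simp only: mult_left_cancel[OF fps_X_neq_zero])
qed

theorem mainTheorem4:
  "\<exists>S :: real fps. fps_nth S 0 = 1 \<and> S ^ 2 = 1 - 4 * fps_X \<and>
     Abs_fps (\<lambda>n. real (I_count n)) =
       (2 - 15 * fps_X + 32 * fps_X ^ 2 - 16 * fps_X ^ 3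
          + fps_X * (1 - 2 * fps_X) * (1 + 2 * fps_X) * S)
       / (2 * (1 - fps_X) ^ 2 * (1 - 2 * fps_X) * (1 - 4 * fps_X))"
proof (intro exI conjI)
  let ?S = "1 - 2 * fps_X * catalan_fps"
  let ?N = "2 - 15 * fps_X + 32 * fps_X ^ 2 - 16 * fps_X ^ 3
    + fps_X * (1 - 2 * fps_X) * (1 + 2 * fps_X) * ?S"
  let ?D = "2 * (1 - fps_X) ^ 2 * (1 - 2 * fps_X) * (1 - 4 * (fps_X :: real fps))"
  show "?S $ 0 = 1" by simp
  show "?S ^ 2 = 1 - 4 * fps_X" using catalan_fps_eq by algebra
  have D0: "?D $ 0 \<noteq> 0" by simp
  have "?N / ?D = ?N * inverse ?D" by (rule fps_divide_unit[OF D0])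
  also have "\<dots> = avoiders_fps * (?D * inverse ?D)"
    unfolding avoiders_fps_times_denominator[symmetric] by (simp only: mult_ac)
  also have "\<dots> = avoiders_fps" by (simp add: inverse_mult_eq_1'[OF D0])
  finally show "Abs_fps (\<lambda>n. real (I_count n)) = ?N / ?D"
    unfolding avoiders_fps_def by simp
qed

end
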